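(* The group $G$ has exactly three orbits on the points of $\Pi$, namely $\{N\}$, $\mathcal Q$, and $\Pi\setminus(\mathcal Q\cup\{N\})$.
   Context: Let $q$ be an even prime power and $\mathrm{PG}(5,q^2)$ have homogeneous coordinates $(X_1,\dots,X_6)$, points written as column vectors. Let $\Sigma$ be the set of points having a coordinate vector $(\alpha,\alpha^q,\delta_0,\beta,\beta^q,\delta_1)$ with $\alpha,\beta\in\mathbb F_{q^2}$, $\delta_0,\delta_1\in\mathbb F_q$ (a Baer subgeometry $\cong\mathrm{PG}(5,q)$). Let $\Pi=\Sigma\cap\{X_6=0\}$, $\mathcal Q=\Sigma\cap\{X_6=0,\ X_3^2+X_1X_5+X_2X_4=0\}$ (a parabolic quadric $\mathcal Q(4,q)$ of $\Pi$) with nucleus $N=(0,0,1,0,0,0)$. Fix $\omega\in\mathbb F_{q^2}\setminus\mathbb F_q$ with $\omega+\omega^q=1$. For $a,b,c,d\in\mathbb F_{q^2}$ with $ad+bc=1$ let $M_{a,b,c,d}$ be the $6\times6$ matrix with rows $(a^2,0,0,0,c^2,\tfrac{c(a+c\omega^q)}{\omega})$, $(0,a^{2q},0,c^{2q},0,\tfrac{c^q(a^q+c^q\omega)}{\omega^q})$, $(ab,a^qb^q,1,c^qd^q,cd,\tfrac{d(a+c\omega^q)}{\omega}+\tfrac{d^q(a^q+c^q\omega)}{\omega^q}+\tfrac{1}{\omega^{q+1}})$, $(0,b^{2q},0,d^{2q},0,\tfrac{d^q(b^q+d^q\omega)+\omega}{\omega^q})$, $(b^2,0,0,0,d^2,\tfrac{d(b+d\omega^q)+\omega^q}{\omega})$,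 $(0,0,0,0,0,1)$, and let $G\cong\mathrm{PSL}(2,q^2)$ be the group of projectivities $X\mapsto M_{a,b,c,d}X$; $G$ stabilizes $\Sigma$, $\Pi$, $\mathcal Q$ and $N$. *)

theory Defs
  imports Main
begin

text \<open>The field F_{q^2} is an abstract finite field type 'a with CARD('a) = q^2;
  F_q is the fixed field of the Frobenius x \<mapsto> x^q. Coordinate vectors of PG(5,q^2) are
  functions nat \<Rightarrow> 'a of which only the coordinates 1..6 are used. A point of PG(5,q^2)
  is identified with the set of all its (nonzero) coordinate vectors.\<close>

definition subfield_q :: "nat \<Rightarrow> 'a::field set" where
  "subfield_q q = {x. x ^ q = x}"

definition nonzero6 :: "(nat \<Rightarrow> 'a::field) \<Rightarrow> bool" where
  "nonzero6 v \<longleftrightarrow> (\<exists>i\<in>{1..6}. v i \<noteq> 0)"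

definition proj_eq :: "(nat \<Rightarrow> 'a::field) \<Rightarrow> (nat \<Rightarrow> 'a) \<Rightarrow> bool" where
  "proj_eq u v \<longleftrightarrow> nonzero6 u \<and> (\<exists>c. c \<noteq> 0 \<and> (\<forall>i\<in>{1..6}. v i = c * u i))"

definition proj_pt :: "(nat \<Rightarrow> 'a::field) \<Rightarrow> (nat \<Rightarrow> 'a) set" where
  "proj_pt u = {v. proj_eq u v}"

definition vec6 :: "'a \<Rightarrow> 'a \<Rightarrow> 'a \<Rightarrow> 'a \<Rightarrow> 'a \<Rightarrow> 'a \<Rightarrow> nat \<Rightarrow> 'a::zero" where
  "vec6 x1 x2 x3 x4 x5 x6 = (\<lambda>i. if i = 1 then x1 else if i = 2 then x2 else if i = 3 then x3
      else if i = 4 then x4 else if i = 5 then x5 else if i = 6 then x6 else 0)"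

definition Sigma_pts :: "nat \<Rightarrow> (nat \<Rightarrow> 'a::field) set" where
  "Sigma_pts q = {v. \<exists>\<alpha> \<beta> \<delta>0 \<delta>1. \<delta>0 \<in> subfield_q q \<and> \<delta>1 \<in> subfield_q q \<and>
       proj_eq (vec6 \<alpha> (\<alpha> ^ q) \<delta>0 \<beta> (\<beta> ^ q) \<delta>1) v}"

definition Pi_pts :: "nat \<Rightarrow> (nat \<Rightarrow> 'a::field) set" where
  "Pi_pts q = {v \<in> Sigma_pts q. v 6 = 0}"

definition Q_pts :: "nat \<Rightarrow> (nat \<Rightarrow> 'a::field) set" where
  "Q_pts q = {v \<in> Pi_pts q. (v 3)\<^sup>2 + v 1 * v 5 + v 2 * v 4 = 0}"

definition N_vec :: "nat \<Rightarrow> 'a::field" where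
  "N_vec = vec6 0 0 1 0 0 0"

definition N_pt :: "(nat \<Rightarrow> 'a::field) set" where
  "N_pt = proj_pt N_vec"

definition Mmat :: "nat \<Rightarrow> 'a::field \<Rightarrow> 'a \<Rightarrow> 'a \<Rightarrow> 'a \<Rightarrow> 'a \<Rightarrow> nat \<Rightarrow> nat \<Rightarrow> 'a" where
  "Mmat q w a b c d i j =
    ([[a^2, 0, 0, 0, c^2, c * (a + c * w^q) / w],
      [0, a^(2*q), 0, c^(2*q), 0, c^q * (a^q + c^q * w) / w^q],
      [a*b, a^q * b^q, 1, c^q * d^q, c*d,
         d * (a + c * w^q) / w + d^q * (a^q + c^q * w) / w^q + 1 / w^(q+1)],
      [0, b^(2*q), 0, d^(2*q), 0, (d^q * (b^q + d^q * w) + w) / w^q],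
      [b^2, 0, 0, 0, d^2, (d * (b + d * w^q) + w^q) / w],
      [0, 0, 0, 0, 0, 1]] ! (i - 1)) ! (j - 1)"

definition mat_vec :: "(nat \<Rightarrow> nat \<Rightarrow> 'a::field) \<Rightarrow> (nat \<Rightarrow> 'a) \<Rightarrow> nat \<Rightarrow> 'a" where
  "mat_vec M v = (\<lambda>i. \<Sum>j\<in>{1..6}. M i j * v j)"

definition G_orbit :: "nat \<Rightarrow> 'a::field \<Rightarrow> (nat \<Rightarrow> 'a) \<Rightarrow> (nat \<Rightarrow> 'a) set" where
  "G_orbit q w u = {v. \<exists>a b c d. a * d + b * c = 1 \<and> proj_eq (mat_vec (Mmat q w a b c d) u) v}"

end

theory Submission
  imports Defs "HOL-Algebra.Algebraic_Closure_Type"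
begin

text \<open>Every point of \<open>\<Pi>\<close> has a coordinate vector \<open>(x\<^sup>2, x\<^sup>2\<^sup>q, d, y\<^sup>2\<^sup>q, y\<^sup>2, 0)\<close> with
  \<open>d \<in> \<bbbF>\<^sub>q\<close>, because squaring is bijective in characteristic 2. In these parameters
  \<open>M\<^sub>a\<^sub>,\<^sub>b\<^sub>,\<^sub>c\<^sub>,\<^sub>d\<close> acts by \<open>(x, y) \<mapsto> (ax + cy, bx + dy)\<close> and
  \<open>d \<mapsto> d + T(abx\<^sup>2) + T(cdy\<^sup>2)\<close>, where \<open>T z = z + z\<^sup>q\<close> is the trace onto \<open>\<bbbF>\<^sub>q\<close>.
  Hence \<open>d + T(xy)\<close> is invariant; \<open>N\<close> is the point \<open>x = y = 0\<close>, and the equation of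
  \<open>\<Q>\<close> evaluates to \<open>(d + T(xy))\<^sup>2\<close>. Conversely, \<open>SL(2, q\<^sup>2)\<close> is transitive on nonzero
  \<open>(x, y)\<close>, and rescaling the coordinate vector by \<open>m \<in> \<bbbF>\<^sub>q\<^sup>*\<close> multiplies the invariant by
  \<open>m\<^sup>2\<close>, which ranges over all of \<open>\<bbbF>\<^sub>q\<^sup>*\<close>.\<close>

lemma finite_field_power_card_eq_self:
  fixes x :: "'a::{field,finite}"
  shows "x ^ card (UNIV :: 'a set) = x"
proof (cases "x = 0")
  case False
  let ?R = "ring_of_type_algebra :: 'a ring"
  interpret R: field ?R ..
  have pow: "x [^]\<^bsub>?R\<^esub> n = x ^ n" for n
    by (induction n) (simp_all add: ring_of_type_algebra_def)
  have units: "Units ?R = UNIV - {0}"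
    by (subst R.field_Units) (simp add: ring_of_type_algebra_def)
  have "x [^]\<^bsub>?R\<^esub> card (Units ?R) = \<one>\<^bsub>?R\<^esub>"
    using False by (intro R.units_power_order_eq_one) (simp_all add: units)
  then have "x ^ card (UNIV - {0 :: 'a}) = 1"
    unfolding units pow by (simp add: ring_of_type_algebra_def)
  moreover have "card (UNIV :: 'a set) = Suc (card (UNIV - {0 :: 'a}))"
    using card_Suc_Diff1[of UNIV "0 :: 'a"] by simp
  ultimately show ?thesis
    by (metis power_Suc mult_1_right)
next
  case True
  then show ?thesis
    using finite_UNIV_card_ge_0[where 'a = 'a] by (simp add: zero_power)
qed

lemma CHAR_eq_2_if_even_card:
  assumes "even (card (UNIV :: 'a::{field,finite} set))"
  shows "CHAR('a) = 2"
proof (rule CHAR_eq_posI)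
  have "(-1 :: 'a) = (-1) ^ card (UNIV :: 'a set)"
    by (rule finite_field_power_card_eq_self[symmetric])
  also have "\<dots> = 1"
    using assms by simp
  finally have "(1 :: 'a) + 1 = 0"
    by simp
  then show "of_nat 2 = (0 :: 'a)"
    by simp
next
  fix n :: nat
  assume "0 < n" "n < 2"
  then show "of_nat n \<noteq> (0 :: 'a)"
    by (simp add: less_2_cases_iff)
qed simp

lemma two_eq_zero_CHAR_2:
  assumes "CHAR('a::comm_ring_1) = 2"
  shows "(2 :: 'a) = 0"
  using of_nat_CHAR[where 'a = 'a] assms by simp

lemma power2_add_CHAR_2:
  assumes "CHAR('a::comm_ring_1) = 2"
  shows "(x + y :: 'a) ^ 2 = x ^ 2 + y ^ 2"
proof (rule freshmans_dream)
  show "prime CHAR('a)" and "2 = CHAR('a)"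
    using assms by simp_all
qed

lemma power2_eq_iff_CHAR_2:
  assumes "CHAR('a::idom) = 2"
  shows "(x :: 'a) ^ 2 = y ^ 2 \<longleftrightarrow> x = y"
proof
  assume "x ^ 2 = y ^ 2"
  then have "(x + y) ^ 2 = 2 * y ^ 2"
    by (simp only: power2_add_CHAR_2[OF assms] mult_2)
  then have "x + y = 0"
    by (simp add: two_eq_zero_CHAR_2[OF assms])
  then show "x = y"
    using uminus_CHAR_2[OF assms] by (simp add: add_eq_0_iff2)
qed simp

lemma surj_power2_CHAR_2:
  assumes "CHAR('a::{idom,finite}) = 2"
  shows "surj (\<lambda>x::'a. x ^ 2)"
  using assms by (simp add: finite_UNIV_inj_surj inj_def power2_eq_iff_CHAR_2)

text \<open>The entry \<open>d\<close> of \<open>M\<^sub>a\<^sub>,\<^sub>b\<^sub>,\<^sub>c\<^sub>,\<^sub>d\<close> is called \<open>e\<close> below, \<open>d\<close> being the third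
  coordinate of a point. In characteristic 2, \<open>a * e + b * c = 1\<close> says that
  \<open>[[a, c], [b, e]]\<close> has determinant 1.\<close>

lemma SL2_CHAR_2_eq_0_iff:
  fixes a b c e x y :: "'a::comm_ring_1"
  assumes "CHAR('a) = 2" and "a * e + b * c = 1"
  shows "a * x + c * y = 0 \<and> b * x + e * y = 0 \<longleftrightarrow> x = 0 \<and> y = 0"
proof
  assume 0: "a * x + c * y = 0 \<and> b * x + e * y = 0"
  have two: "(2 :: 'a) = 0"
    using two_eq_zero_CHAR_2[OF assms(1)] .
  have "x = (a * e + b * c) * x + 2 * (c * e * y)" and "y = (a * e + b * c) * y + 2 * (a * b * x)"
    using assms(2) two by simp_all
  then have "x = e * (a * x + c * y) + c * (b * x + e * y)"
    and "y = b * (a * x + c * y) + a * (b * x + e * y)"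
    by (simp_all add: algebra_simps)
  with 0 show "x = 0 \<and> y = 0" by simp
qed simp

lemma SL2_CHAR_2_transitive:
  fixes x y u v :: "'a::field"
  assumes "CHAR('a) = 2" and "x \<noteq> 0 \<or> y \<noteq> 0" and "u \<noteq> 0 \<or> v \<noteq> 0"
  obtains a b c e where "a * e + b * c = 1" "a * x + c * y = u" "b * x + e * y = v"
proof -
  have dual: "\<exists>r s. z * s + z' * r = 1" if "z \<noteq> 0 \<or> z' \<noteq> 0" for z z' :: 'a
  proof (cases "z = 0")
    case True
    with that show ?thesis by (intro exI[of _ "1 / z'"] exI[of _ 0]) simp
  next
    case False
    then show ?thesis by (intro exI[of _ 0] exI[of _ "1 / z"]) simp
  qed
  obtain r s r' s' where rs: "x * s + y * r = 1" and rs': "u * s' + v * r' = 1"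
    using dual[OF assms(2)] dual[OF assms(3)] by blast
  let ?a = "u * s + r' * y" and ?c = "u * r + r' * x"
    and ?b = "v * s + s' * y" and ?e = "v * r + s' * x"
  have two: "(2 :: 'a) = 0"
    using two_eq_zero_CHAR_2[OF assms(1)] .
  have "?a * ?e + ?b * ?c
      = (u * s' + v * r') * (x * s + y * r) + 2 * (u * v * r * s + r' * s' * x * y)"
    by (simp add: algebra_simps)
  then have det: "?a * ?e + ?b * ?c = 1"
    by (simp only: rs rs' two) simp
  have "?a * x + ?c * y = u * (x * s + y * r) + 2 * (r' * x * y)"
    and "?b * x + ?e * y = v * (x * s + y * r) + 2 * (s' * x * y)"
    by (simp_all add: algebra_simps)
  then have "?a * x + ?c * y = u" and "?b * x + ?e * y = v"
    by (simp_all only: rs two) simp_all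
  with det show thesis
    by (rule that)
qed

lemma proj_eq_refl: "nonzero6 u \<Longrightarrow> proj_eq u u"
  unfolding proj_eq_def by (metis mult_1 one_neq_zero)

lemma proj_eq_smult_iff:
  assumes "\<forall>i\<in>{1..6}. u' i = s * u i" and "s \<noteq> 0"
  shows "proj_eq u' v \<longleftrightarrow> proj_eq u v"
proof
  assume "proj_eq u' v"
  then obtain c where "c \<noteq> 0" "\<forall>i\<in>{1..6}. v i = c * u' i" "nonzero6 u'"
    unfolding proj_eq_def by blast
  with assms show "proj_eq u v"
    unfolding proj_eq_def nonzero6_def by (metis mult.assoc mult_eq_0_iff)
next
  assume "proj_eq u v"
  then obtain c where "c \<noteq> 0" "\<forall>i\<in>{1..6}. v i = c * u i" "nonzero6 u"
    unfolding proj_eq_def by blast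
  moreover have "\<forall>i\<in>{1..6}. v i = (c / s) * u' i"
    using calculation assms by simp
  ultimately show "proj_eq u' v"
    using assms unfolding proj_eq_def nonzero6_def by (metis divide_eq_0_iff mult_eq_0_iff)
qed

lemma mat_vec_smult:
  assumes "\<forall>j\<in>{1..6}. u j = s * v j"
  shows "mat_vec M u i = s * mat_vec M v i"
  unfolding mat_vec_def using assms by (simp add: sum_distrib_left algebra_simps)

lemma atLeastAtMost_1_6: "{1..6 :: nat} = {1, 2, 3, 4, 5, 6}"
  by auto

datatype Pi_kind = Nucleus | On_quadric | Off_quadric

lemma UNIV_Pi_kind: "(UNIV :: Pi_kind set) = {Nucleus, On_quadric, Off_quadric}"
  using Pi_kind.exhaust by auto

locale GF_q2_char2 =
  fixes q k :: nat
  assumes q_eq: "q = 2 ^ k" and k_pos: "k \<ge> 1"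
    and card_UNIV: "card (UNIV :: 'a::{field,finite} set) = q ^ 2"
begin

lemma CHAR_eq_2: "CHAR('a) = 2"
  using k_pos by (intro CHAR_eq_2_if_even_card) (simp add: card_UNIV q_eq)

lemma q_pos: "q > 0"
  by (simp add: q_eq)

lemma frobenius_add: "((x :: 'a) + y) ^ q = x ^ q + y ^ q"
  by (rule freshmans_dream') (simp_all add: CHAR_eq_2 q_eq)

lemma frobenius_frobenius: "((x :: 'a) ^ q) ^ q = x"
  using finite_field_power_card_eq_self[of x] by (simp add: card_UNIV power2_eq_square power_mult)

lemma two_eq_0: "(2 :: 'a) = 0"
  by (rule two_eq_zero_CHAR_2[OF CHAR_eq_2])

lemma mem_subfield_q_iff [simp]: "x \<in> subfield_q q \<longleftrightarrow> (x :: 'a) ^ q = x"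
  by (simp add: subfield_q_def)

lemma sqrt_in_subfield_q:
  assumes "r \<in> subfield_q q"
  obtains m :: 'a where "m \<in> subfield_q q" "m ^ 2 = r"
proof -
  obtain m :: 'a where m: "m ^ 2 = r"
    using surj_power2_CHAR_2[OF CHAR_eq_2] by (metis surjD)
  have "(m ^ q) ^ 2 = (m ^ 2) ^ q"
    by (simp only: power_mult[symmetric] mult.commute)
  also have "\<dots> = m ^ 2"
    using assms m by simp
  finally have "(m ^ q) ^ 2 = m ^ 2" .
  then have "m ^ q = m"
    using power2_eq_iff_CHAR_2[OF CHAR_eq_2] by blast
  with m show thesis using that by simp
qed

definition trace :: "'a \<Rightarrow> 'a" where
  "trace z = z + z ^ q"

lemma trace_0 [simp]: "trace 0 = 0"
  using q_pos by (simp add: trace_def zero_power)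

lemma trace_in_subfield_q: "trace z \<in> subfield_q q"
  by (simp add: trace_def frobenius_add frobenius_frobenius add.commute)

lemma trace_add: "trace (x + y) = trace x + trace y"
  by (simp add: trace_def frobenius_add algebra_simps)

lemma trace_mult_subfield_q: "m \<in> subfield_q q \<Longrightarrow> trace (m * z) = m * trace z"
  by (simp add: trace_def power_mult_distrib algebra_simps)

definition Pi_vec :: "'a \<Rightarrow> 'a \<Rightarrow> 'a \<Rightarrow> nat \<Rightarrow> 'a" where
  "Pi_vec x y d = vec6 (x ^ 2) (x ^ (2 * q)) d (y ^ (2 * q)) (y ^ 2) 0"

lemma nonzero6_Pi_vec_iff: "nonzero6 (Pi_vec x y d) \<longleftrightarrow> x \<noteq> 0 \<or> y \<noteq> 0 \<or> d \<noteq> 0"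
  unfolding nonzero6_def atLeastAtMost_1_6 using q_pos by (auto simp: Pi_vec_def vec6_def)

lemma Pi_vec_smult:
  assumes "m \<in> subfield_q q"
  shows "Pi_vec (m * x) (m * y) (m ^ 2 * d) i = m ^ 2 * Pi_vec x y d i"
proof -
  have "m ^ (2 * q) = m ^ 2"
    using assms by (simp add: power_mult mult.commute[of 2])
  then show ?thesis
    by (simp add: Pi_vec_def vec6_def power_mult_distrib)
qed

lemma mem_Pi_pts_iff: "v \<in> Pi_pts q \<longleftrightarrow> (\<exists>x y d. d \<in> subfield_q q \<and> proj_eq (Pi_vec x y d) v)"
proof
  assume "v \<in> Pi_pts q"
  then obtain \<alpha> \<beta> d e where d: "d \<in> subfield_q q" and v: "v 6 = 0"
    and pe: "proj_eq (vec6 \<alpha> (\<alpha> ^ q) d \<beta> (\<beta> ^ q) e) v"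
    unfolding Pi_pts_def Sigma_pts_def by blast
  have "e = 0"
    using pe v unfolding proj_eq_def by (auto simp: vec6_def)
  obtain x y :: 'a where x: "x ^ 2 = \<alpha>" and y: "y ^ 2 = \<beta> ^ q"
    using surj_power2_CHAR_2[OF CHAR_eq_2] by (metis surjD)
  have "Pi_vec x y d = vec6 \<alpha> (\<alpha> ^ q) d \<beta> (\<beta> ^ q) e"
    using x y \<open>e = 0\<close> by (simp add: Pi_vec_def power_mult frobenius_frobenius)
  with d pe show "\<exists>x y d. d \<in> subfield_q q \<and> proj_eq (Pi_vec x y d) v"
    by metis
next
  assume "\<exists>x y d. d \<in> subfield_q q \<and> proj_eq (Pi_vec x y d) v"
  then obtain x y d where d: "d \<in> subfield_q q" and pe: "proj_eq (Pi_vec x y d) v"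
    by blast
  have "Pi_vec x y d = vec6 (x ^ 2) ((x ^ 2) ^ q) d (y ^ (2 * q)) ((y ^ (2 * q)) ^ q) 0"
    by (simp add: Pi_vec_def power_mult frobenius_frobenius)
  moreover have "(0 :: 'a) \<in> subfield_q q"
    using q_pos by simp
  ultimately have "v \<in> Sigma_pts q"
    using d pe unfolding Sigma_pts_def by (metis (mono_tags, lifting) mem_Collect_eq)
  moreover have "v 6 = 0"
    using pe unfolding proj_eq_def by (auto simp: Pi_vec_def vec6_def)
  ultimately show "v \<in> Pi_pts q"
    by (simp add: Pi_pts_def)
qed

definition act_d :: "'a \<Rightarrow> 'a \<Rightarrow> 'a \<Rightarrow> 'a \<Rightarrow> 'a \<Rightarrow> 'a \<Rightarrow> 'a \<Rightarrow> 'a" where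
  "act_d a b c e x y d = d + trace (a * b * x ^ 2) + trace (c * e * y ^ 2)"

lemma act_d_in_subfield_q: "d \<in> subfield_q q \<Longrightarrow> act_d a b c e x y d \<in> subfield_q q"
  using trace_in_subfield_q by (simp add: act_d_def frobenius_add)

text \<open>Only the last column of \<open>M\<^sub>a\<^sub>,\<^sub>b\<^sub>,\<^sub>c\<^sub>,\<^sub>d\<close> involves \<open>\<omega>\<close>, and it meets the vanishing sixth
  coordinate.\<close>

lemma mat_vec_Mmat_Pi_vec:
  assumes "i \<in> {1..6}"
  shows "mat_vec (Mmat q w a b c e) (Pi_vec x y d) i
    = Pi_vec (a * x + c * y) (b * x + e * y) (act_d a b c e x y d) i"
proof -
  have sq: "(u + v) ^ 2 = u ^ 2 + v ^ 2" and sq_q: "(u + v) ^ (q * 2) = u ^ (q * 2) + v ^ (q * 2)"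
    for u v :: 'a
    by (simp_all add: power2_add_CHAR_2[OF CHAR_eq_2] power_mult frobenius_add)
  have "i = 1 \<or> i = 2 \<or> i = 3 \<or> i = 4 \<or> i = 5 \<or> i = 6"
    using assms by auto
  then show ?thesis
    unfolding mat_vec_def atLeastAtMost_1_6
    by (elim disjE; simp add: Mmat_def Pi_vec_def vec6_def act_d_def trace_def sq sq_q
        power_mult_distrib algebra_simps flip: power_mult)
qed

lemma mem_G_orbit_Pi_vec_iff:
  assumes "proj_eq (Pi_vec x y d) u"
  shows "v \<in> G_orbit q w u \<longleftrightarrow> (\<exists>a b c e. a * e + b * c = 1 \<and>
    proj_eq (Pi_vec (a * x + c * y) (b * x + e * y) (act_d a b c e x y d)) v)"
proof -
  obtain s where s: "s \<noteq> 0" "\<forall>i\<in>{1..6}. u i = s * Pi_vec x y d i"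
    using assms unfolding proj_eq_def by blast
  have "proj_eq (mat_vec (Mmat q w a b c e) u) v \<longleftrightarrow>
    proj_eq (Pi_vec (a * x + c * y) (b * x + e * y) (act_d a b c e x y d)) v"
    for a b c e
    using s by (intro proj_eq_smult_iff) (simp_all add: mat_vec_smult[OF s(2)] mat_vec_Mmat_Pi_vec)
  then show ?thesis
    unfolding G_orbit_def by simp
qed

definition Pi_inv :: "'a \<Rightarrow> 'a \<Rightarrow> 'a \<Rightarrow> 'a" where
  "Pi_inv x y d = d + trace (x * y)"

lemma Pi_inv_in_subfield_q: "d \<in> subfield_q q \<Longrightarrow> Pi_inv x y d \<in> subfield_q q"
  using trace_in_subfield_q[of "x * y"] by (simp add: Pi_inv_def frobenius_add)

lemma Pi_inv_SL2_invariant: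
  assumes "a * e + b * c = 1"
  shows "Pi_inv (a * x + c * y) (b * x + e * y) (act_d a b c e x y d) = Pi_inv x y d"
proof -
  have "(a * x + c * y) * (b * x + e * y)
      = a * b * x ^ 2 + c * e * y ^ 2 + (a * e + b * c) * (x * y)"
    by (simp add: algebra_simps power2_eq_square)
  with assms show ?thesis
    by (simp add: Pi_inv_def act_d_def trace_add algebra_simps two_eq_0)
qed

lemma N_vec_eq_Pi_vec: "N_vec = Pi_vec 0 0 1"
  using q_pos by (simp add: N_vec_def Pi_vec_def zero_power)

lemma mem_N_pt_iff:
  assumes "proj_eq (Pi_vec x y d) v"
  shows "v \<in> N_pt \<longleftrightarrow> x = 0 \<and> y = 0"
proof -
  obtain s where s: "s \<noteq> 0" "\<forall>i\<in>{1..6}. v i = s * Pi_vec x y d i"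
    using assms unfolding proj_eq_def by blast
  show ?thesis
  proof
    assume "v \<in> N_pt"
    then obtain c where "\<forall>i\<in>{1..6}. v i = c * Pi_vec 0 0 1 i"
      unfolding N_pt_def proj_pt_def proj_eq_def N_vec_eq_Pi_vec by blast
    with s show "x = 0 \<and> y = 0"
      by (force simp: Pi_vec_def vec6_def dest: bspec[of _ _ 1] bspec[of _ _ 5])
  next
    assume xy: "x = 0 \<and> y = 0"
    with assms have "d \<noteq> 0"
      unfolding proj_eq_def nonzero6_Pi_vec_iff by simp
    moreover have "\<forall>i\<in>{1..6}. Pi_vec x y d i = d * Pi_vec 0 0 1 i"
      using xy q_pos by (simp add: Pi_vec_def vec6_def)
    ultimately show "v \<in> N_pt"
      using assms proj_eq_smult_iff unfolding N_pt_def proj_pt_def N_vec_eq_Pi_vec by blast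
  qed
qed

lemma mem_Q_pts_iff:
  assumes "d \<in> subfield_q q" and "proj_eq (Pi_vec x y d) v"
  shows "v \<in> Q_pts q \<longleftrightarrow> Pi_inv x y d = 0"
proof -
  obtain s where s: "s \<noteq> 0" "\<forall>i\<in>{1..6}. v i = s * Pi_vec x y d i"
    using assms(2) unfolding proj_eq_def by blast
  have "(v 3)\<^sup>2 + v 1 * v 5 + v 2 * v 4 = s ^ 2 * (d ^ 2 + (x * y) ^ 2 + ((x * y) ^ q) ^ 2)"
    using s by (simp add: Pi_vec_def vec6_def power_mult_distrib algebra_simps power2_eq_square
        mult.commute[of 2] power_mult)
  also have "\<dots> = s ^ 2 * (Pi_inv x y d) ^ 2"
    by (simp add: Pi_inv_def trace_def power2_add_CHAR_2[OF CHAR_eq_2])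
  finally show ?thesis
    using assms mem_Pi_pts_iff s(1) unfolding Q_pts_def by auto
qed

definition Pi_kind_of :: "'a \<Rightarrow> 'a \<Rightarrow> 'a \<Rightarrow> Pi_kind" where
  "Pi_kind_of x y d =
    (if x = 0 \<and> y = 0 then Nucleus else if Pi_inv x y d = 0 then On_quadric else Off_quadric)"

fun Pi_part :: "Pi_kind \<Rightarrow> (nat \<Rightarrow> 'a) set" where
  "Pi_part Nucleus = N_pt"
| "Pi_part On_quadric = Q_pts q"
| "Pi_part Off_quadric = Pi_pts q - (Q_pts q \<union> N_pt)"

lemma mem_Pi_part_iff:
  assumes "d \<in> subfield_q q" and "proj_eq (Pi_vec x y d) v"
  shows "v \<in> Pi_part \<kappa> \<longleftrightarrow> Pi_kind_of x y d = \<kappa>"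
proof -
  have "x = 0 \<and> y = 0 \<Longrightarrow> Pi_inv x y d \<noteq> 0"
    using assms(2) unfolding proj_eq_def nonzero6_Pi_vec_iff by (simp add: Pi_inv_def)
  moreover have "v \<in> Pi_pts q"
    using assms mem_Pi_pts_iff by blast
  ultimately show ?thesis
    using mem_N_pt_iff[OF assms(2)] mem_Q_pts_iff[OF assms]
    by (cases \<kappa>) (auto simp: Pi_kind_of_def)
qed

lemma Pi_part_subset_Pi_pts: "Pi_part \<kappa> \<subseteq> Pi_pts q"
proof
  fix v assume v: "v \<in> Pi_part \<kappa>"
  show "v \<in> Pi_pts q"
  proof (cases \<kappa>)
    case Nucleus
    with v have "proj_eq (Pi_vec 0 0 1) v"
      by (simp add: N_pt_def proj_pt_def N_vec_eq_Pi_vec)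
    moreover have "(1 :: 'a) \<in> subfield_q q"
      by simp
    ultimately show ?thesis
      unfolding mem_Pi_pts_iff by blast
  qed (use v in \<open>auto simp: Q_pts_def\<close>)
qed

lemma Pi_kind_of_SL2_invariant:
  assumes "a * e + b * c = 1"
  shows "Pi_kind_of (a * x + c * y) (b * x + e * y) (act_d a b c e x y d) = Pi_kind_of x y d"
  unfolding Pi_kind_of_def Pi_inv_SL2_invariant[OF assms]
    SL2_CHAR_2_eq_0_iff[OF CHAR_eq_2 assms] ..

lemma Pi_kind_of_SL2_transitive:
  assumes d: "d \<in> subfield_q q" and d': "d' \<in> subfield_q q"
    and nz: "nonzero6 (Pi_vec x y d)" and nz': "nonzero6 (Pi_vec x' y' d')"
    and kind: "Pi_kind_of x y d = Pi_kind_of x' y' d'"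
  obtains a b c e s where "a * e + b * c = 1" "s \<noteq> 0"
    "\<forall>i\<in>{1..6}.
      Pi_vec (a * x + c * y) (b * x + e * y) (act_d a b c e x y d) i = s * Pi_vec x' y' d' i"
proof (cases "x = 0 \<and> y = 0")
  case True
  with kind have xy': "x' = 0 \<and> y' = 0"
    by (auto simp: Pi_kind_of_def split: if_splits)
  with True nz nz' have "d \<noteq> 0" "d' \<noteq> 0"
    by (simp_all add: nonzero6_Pi_vec_iff)
  moreover have "Pi_vec 0 0 d i = d / d' * Pi_vec 0 0 d' i" for i
    using q_pos \<open>d' \<noteq> 0\<close> by (simp add: Pi_vec_def vec6_def zero_power)
  ultimately show thesis
    using that[of 1 1 0 0 "d / d'"] True xy' by (simp add: act_d_def)
next
  case False
  with kind have xy': "x' \<noteq> 0 \<or> y' \<noteq> 0" and inv: "Pi_inv x y d = 0 \<longleftrightarrow> Pi_inv x' y' d' = 0"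
    by (auto simp: Pi_kind_of_def split: if_splits)
  obtain m where m: "m \<in> subfield_q q" "m \<noteq> 0" "m ^ 2 * Pi_inv x' y' d' = Pi_inv x y d"
  proof (cases "Pi_inv x y d = 0")
    case True
    with inv show thesis using that[of 1] by simp
  next
    case False
    have "Pi_inv x y d / Pi_inv x' y' d' \<in> subfield_q q"
      using Pi_inv_in_subfield_q[OF d] Pi_inv_in_subfield_q[OF d'] by (simp add: power_divide)
    then obtain m where m: "m \<in> subfield_q q" "m ^ 2 = Pi_inv x y d / Pi_inv x' y' d'"
      by (rule sqrt_in_subfield_q)
    with False inv have "m \<noteq> 0" "m ^ 2 * Pi_inv x' y' d' = Pi_inv x y d"
      by auto
    with m(1) show thesis
      by (rule that)
  qed
  from m(2) xy' have "m * x' \<noteq> 0 \<or> m * y' \<noteq> 0" by simp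
  with False obtain a b c e
    where g: "a * e + b * c = 1" "a * x + c * y = m * x'" "b * x + e * y = m * y'"
    using SL2_CHAR_2_transitive[OF CHAR_eq_2] by metis
  define D where "D = act_d a b c e x y d"
  have m2: "m ^ 2 \<in> subfield_q q"
    using m(1) by (simp add: power2_eq_square power_mult_distrib)
  have "D + trace (m ^ 2 * (x' * y')) = Pi_inv (m * x') (m * y') D"
    by (simp add: Pi_inv_def power2_eq_square ac_simps)
  also have "\<dots> = m ^ 2 * Pi_inv x' y' d'"
    using Pi_inv_SL2_invariant[OF g(1), of x y d] g(2,3) m(3) by (simp add: D_def)
  also have "\<dots> = m ^ 2 * d' + trace (m ^ 2 * (x' * y'))"
    using trace_mult_subfield_q[OF m2, of "x' * y'"] by (simp add: Pi_inv_def distrib_left)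
  finally have "D = m ^ 2 * d'"
    by simp
  then have "\<forall>i\<in>{1..6}.
      Pi_vec (a * x + c * y) (b * x + e * y) D i = m ^ 2 * Pi_vec x' y' d' i"
    using g(2,3) Pi_vec_smult[OF m(1)] by simp
  moreover have "m ^ 2 \<noteq> 0"
    using m(2) by simp
  ultimately show thesis
    using g(1) that unfolding D_def by blast
qed

lemma G_orbit_Pi_vec:
  assumes d: "d \<in> subfield_q q" and u: "proj_eq (Pi_vec x y d) u"
  shows "G_orbit q w u = Pi_part (Pi_kind_of x y d)"
proof (intro Set.set_eqI iffI)
  fix v assume "v \<in> G_orbit q w u"
  then obtain a b c e where g: "a * e + b * c = 1" and
    v: "proj_eq (Pi_vec (a * x + c * y) (b * x + e * y) (act_d a b c e x y d)) v"
    using mem_G_orbit_Pi_vec_iff[OF u] by blast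
  from d have "act_d a b c e x y d \<in> subfield_q q"
    by (rule act_d_in_subfield_q)
  then show "v \<in> Pi_part (Pi_kind_of x y d)"
    using mem_Pi_part_iff[OF _ v] Pi_kind_of_SL2_invariant[OF g] by simp
next
  fix v assume v: "v \<in> Pi_part (Pi_kind_of x y d)"
  then obtain x' y' d' where d': "d' \<in> subfield_q q" and v': "proj_eq (Pi_vec x' y' d') v"
    using Pi_part_subset_Pi_pts mem_Pi_pts_iff by blast
  have "Pi_kind_of x y d = Pi_kind_of x' y' d'"
    using mem_Pi_part_iff[OF d' v'] v by simp
  moreover have "nonzero6 (Pi_vec x y d)" "nonzero6 (Pi_vec x' y' d')"
    using u v' by (simp_all add: proj_eq_def)
  ultimately obtain a b c e s where "a * e + b * c = 1" "s \<noteq> 0"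
    "\<forall>i\<in>{1..6}.
      Pi_vec (a * x + c * y) (b * x + e * y) (act_d a b c e x y d) i = s * Pi_vec x' y' d' i"
    using Pi_kind_of_SL2_transitive[OF d d'] by metis
  with v' show "v \<in> G_orbit q w u"
    unfolding mem_G_orbit_Pi_vec_iff[OF u] using proj_eq_smult_iff by blast
qed

lemma Pi_kind_of_surj:
  obtains x y d where "nonzero6 (Pi_vec x y d)" "d \<in> subfield_q q" "Pi_kind_of x y d = \<kappa>"
proof (cases \<kappa>)
  case Nucleus
  then show thesis
    using that[of 0 0 1] by (simp add: nonzero6_Pi_vec_iff Pi_kind_of_def)
next
  case On_quadric
  then show thesis
    using that[of 1 0 0] q_pos by (simp add: nonzero6_Pi_vec_iff Pi_kind_of_def Pi_inv_def)
next
  case Off_quadric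
  then show thesis
    using that[of 1 0 1] by (simp add: nonzero6_Pi_vec_iff Pi_kind_of_def Pi_inv_def)
qed

lemma Pi_part_representative:
  obtains u where "u \<in> Pi_pts q" "\<And>\<kappa>'. u \<in> Pi_part \<kappa>' \<longleftrightarrow> \<kappa>' = \<kappa>"
    "G_orbit q w u = Pi_part \<kappa>"
proof -
  obtain x y d where nz: "nonzero6 (Pi_vec x y d)" and d: "d \<in> subfield_q q"
    and kind: "Pi_kind_of x y d = \<kappa>"
    by (rule Pi_kind_of_surj)
  have pe: "proj_eq (Pi_vec x y d) (Pi_vec x y d)"
    using nz by (rule proj_eq_refl)
  show thesis
  proof (rule that)
    show "Pi_vec x y d \<in> Pi_pts q"
      using d pe mem_Pi_pts_iff by blast
    show "Pi_vec x y d \<in> Pi_part \<kappa>' \<longleftrightarrow> \<kappa>' = \<kappa>" for \<kappa>'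
      using mem_Pi_part_iff[OF d pe] kind by auto
    show "G_orbit q w (Pi_vec x y d) = Pi_part \<kappa>"
      using G_orbit_Pi_vec[OF d pe] kind by simp
  qed
qed

lemma Pi_orbits: "{G_orbit q w u | u. u \<in> Pi_pts q} = range Pi_part"
proof (intro Set.set_eqI iffI)
  fix S assume "S \<in> {G_orbit q w u | u. u \<in> Pi_pts q}"
  then obtain u x y d where "S = G_orbit q w u" "d \<in> subfield_q q" "proj_eq (Pi_vec x y d) u"
    using mem_Pi_pts_iff by blast
  then show "S \<in> range Pi_part"
    using G_orbit_Pi_vec by blast
next
  fix S assume "S \<in> range Pi_part"
  then obtain \<kappa> where "S = Pi_part \<kappa>"
    by blast
  moreover obtain u where "u \<in> Pi_pts q" "G_orbit q w u = Pi_part \<kappa>"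
    using Pi_part_representative by metis
  ultimately show "S \<in> {G_orbit q w u | u. u \<in> Pi_pts q}"
    by blast
qed

lemma inj_Pi_part: "inj Pi_part"
proof (rule injI)
  fix \<kappa> \<kappa>' assume "Pi_part \<kappa> = Pi_part \<kappa>'"
  moreover obtain u where "\<And>\<kappa>''. u \<in> Pi_part \<kappa>'' \<longleftrightarrow> \<kappa>'' = \<kappa>"
    using Pi_part_representative by metis
  ultimately show "\<kappa> = \<kappa>'"
    by metis
qed

end

theorem mainTheorem13:
  fixes q k :: nat and w :: "'a::{field,finite}"
  assumes "k \<ge> 1" and "q = 2 ^ k" and "card (UNIV :: 'a set) = q ^ 2"
    and "w \<notin> subfield_q q" and "w + w ^ q = 1"
  shows "{G_orbit q w u | u. u \<in> Pi_pts q} =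
           {N_pt, Q_pts q, Pi_pts q - (Q_pts q \<union> N_pt)}
         \<and> card {N_pt, Q_pts q, Pi_pts q - (Q_pts q \<union> (N_pt :: (nat \<Rightarrow> 'a) set))} = 3"
proof -
  interpret GF_q2_char2 q k
    using assms(1-3) by unfold_locales
  have parts: "range Pi_part = {N_pt, Q_pts q, Pi_pts q - (Q_pts q \<union> (N_pt :: (nat \<Rightarrow> 'a) set))}"
    by (simp add: UNIV_Pi_kind)
  have "card (range Pi_part :: (nat \<Rightarrow> 'a) set set) = card (UNIV :: Pi_kind set)"
    using inj_Pi_part by (rule card_image)
  also have "\<dots> = 3"
    by (simp add: UNIV_Pi_kind)
  finally show ?thesis
    using Pi_orbits parts by simp
qed

end
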